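(* Fix an integer $k\ge1$. Let $M$ be the set consisting of the empty composition together with all Fibonacci compositions of even numbers that start with $(1,2^{k-1})$. Let $Q$ be the free monoid (under concatenation) whose primes are the compositions $(1,2^l,1,2^{j})$ with $l\ge0$ and $0\le j\le k-2$ (so $Q$ contains only the empty composition when $k=1$). Then $M$ is a free monoid under concatenation whose primes are exactly the compositions of the form $(1,2^{k-1},2^i,q,1,2^j)$ with $i,j\ge0$ integers and $q\in Q$. Moreover, assigning weight $n$ to a composition of $2n$, the generating function of the primes of $M$ is $\dfrac{x^k}{1-3x+x^2+x^k}$, and $$1+\sum_{n\ge 0}F_{2n+2}x^{n+k}=1+\frac{x^k}{1-3x+x^2}=\Bigl(1-\frac{x^k}{1-3x+x^2+x^k}\Bigr)^{-1}.$$
   Context: A Fibonacci composition is a composition (finite sequence of positive integers) with all parts equal to $1$ or $2$; a Fibonacci composition of $n$ is one whose parts sum to $n$. $2^j$ denotes $j$ consecutive parts equal to $2$. A free monoid is one in which every element factors uniquely as a product of primes. The generating function of a set $S$ of compositions of even numbers is $\sum_{c\in S}x^{|c|/2}$, $|c|$ the sum of the parts. Fibonacci numbers: $F_0=0$, $F_1=1$, $F_n=F_{n-1}+F_{n-2}$. *)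

theory Defs
  imports "HOL-Computational_Algebra.Formal_Power_Series" "HOL-Number_Theory.Fib"
begin

text \<open>Compositions are lists of positive naturals; concatenation is the monoid operation.\<close>

definition fib_comp :: "nat list \<Rightarrow> bool" where
  "fib_comp c \<longleftrightarrow> set c \<subseteq> {1, 2}"

definition prime_of :: "nat list set \<Rightarrow> nat list \<Rightarrow> bool" where
  "prime_of M c \<longleftrightarrow> c \<in> M \<and> c \<noteq> [] \<and>
     (\<forall>a b. a \<in> M \<longrightarrow> b \<in> M \<longrightarrow> c = a @ b \<longrightarrow> a = [] \<or> b = [])"

definition free_monoid :: "nat list set \<Rightarrow> bool" where
  "free_monoid M \<longleftrightarrow> [] \<in> M \<and> (\<forall>a\<in>M. \<forall>b\<in>M. a @ b \<in> M) \<and>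
     (\<forall>c\<in>M. \<exists>!ps. set ps \<subseteq> {p. prime_of M p} \<and> concat ps = c)"

definition M_set :: "nat \<Rightarrow> nat list set" where
  "M_set k = {c. c = [] \<or> (fib_comp c \<and> even (sum_list c) \<and>
                 (\<exists>r. c = (1 # replicate (k - 1) 2) @ r))}"

definition Q_primes :: "nat \<Rightarrow> nat list set" where
  "Q_primes k = {[1] @ replicate l 2 @ [1] @ replicate j 2 | l j. j + 2 \<le> k}"

definition Q_set :: "nat \<Rightarrow> nat list set" where
  "Q_set k = {concat ps | ps. set ps \<subseteq> Q_primes k}"

definition P_set :: "nat \<Rightarrow> nat list set" where
  "P_set k = {(1 # replicate (k - 1) 2) @ replicate i 2 @ q @ [1] @ replicate j 2
              | i j q. q \<in> Q_set k}"

definition gen_fun :: "nat list set \<Rightarrow> rat fps" where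
  "gen_fun S = Abs_fps (\<lambda>n. of_nat (card {c \<in> S. sum_list c = 2 * n}))"

end

theory Submission
  imports Defs
begin

unbundle fps_syntax

text \<open>
  Write \<open>w = (1, 2\<^sup>k\<^sup>-\<^sup>1)\<close>. The monoid \<open>M\<close> is stable: if \<open>u, uv, vw \<in> M\<close>, then \<open>v\<close> has even sum and,
  when nonempty, starts with \<open>w\<close> because every nonempty proper prefix of \<open>w\<close> has odd sum; hence
  \<open>v \<in> M\<close>, and stability makes the factorization into primes unique. A nonempty \<open>w t \<in> M\<close> splits
  in \<open>M\<close> exactly when \<open>w\<close> reoccurs after a prefix of even sum, i.e. after an odd-numbered \<open>1\<close>
  (other than the first) followed by at least \<open>k - 1\<close> twos. Grouping the \<open>1\<close>s of \<open>t\<close> in pairs,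
  this is ruled out precisely by the shape \<open>t = 2\<^sup>i q 1 2\<^sup>j\<close> with \<open>q \<in> Q\<close>.

  An element of \<open>M\<close> of weight \<open>n \<ge> k\<close> is \<open>w\<close> followed by an arbitrary Fibonacci composition of
  \<open>2(n - k) + 1\<close>, so \<open>M(x) = 1 + x\<^sup>k/(1 - 3x + x\<^sup>2)\<close>. Peeling off the first prime gives
  \<open>M = 1 + P M\<close>, which determines \<open>P(x)\<close>.
\<close>

section \<open>Power series identities\<close>

lemma fib_add_4: "fib (n + 4) + fib n = 3 * fib (n + 2)"
  by (simp add: numeral_eq_Suc)

lemma even_fib_fps_times:
  "Abs_fps (\<lambda>n. of_nat (fib (2 * n + 2))) * (1 - 3 * fps_X + fps_X ^ 2) = (1 :: 'a::comm_ring_1 fps)"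
proof -
  define a :: "nat \<Rightarrow> 'a" where "a n = of_nat (fib (2 * n + 2))" for n
  have rec: "a (m + 2) = 3 * a (m + 1) - a m" for m
  proof -
    have "a (m + 2) + a m = 3 * a (m + 1)"
      using arg_cong[OF fib_add_4[of "2 * m"], of "of_nat :: nat \<Rightarrow> 'a"]
      by (simp add: a_def algebra_simps)
    then show ?thesis by (simp add: algebra_simps)
  qed
  have "Abs_fps a * (1 - 3 * fps_X + fps_X ^ 2) = 1"
  proof (rule fps_ext)
    fix n
    have "Abs_fps a * (1 - 3 * fps_X + fps_X ^ 2)
        = Abs_fps a - fps_const 3 * (fps_X * Abs_fps a) + fps_X ^ 2 * Abs_fps a"
      by (simp add: algebra_simps numeral_fps_const)
    then have "(Abs_fps a * (1 - 3 * fps_X + fps_X ^ 2)) $ n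
        = a n - 3 * (if n = 0 then 0 else a (n - 1)) + (if n < 2 then 0 else a (n - 2))"
      by (simp add: fps_X_power_mult_nth del: power_Suc)
    also have "\<dots> = 1 $ n"
    proof (cases "n < 2")
      case True
      then have "n = 0 \<or> n = 1" by auto
      then show ?thesis by (auto simp: a_def numeral_eq_Suc)
    next
      case False
      then obtain m where "n = m + 2" by (metis add.commute le_Suc_ex not_less)
      then show ?thesis using rec[of m] by simp
    qed
    finally show "(Abs_fps a * (1 - 3 * fps_X + fps_X ^ 2)) $ n = 1 $ n" .
  qed
  then show ?thesis unfolding a_def[abs_def] .
qed

lemma fps_X_power_divide_even_fib:
  "fps_X ^ k / (1 - 3 * fps_X + fps_X ^ 2)
     = Abs_fps (\<lambda>m. if k \<le> m then of_nat (fib (2 * (m - k) + 2)) else (0 :: 'a::field))"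
proof -
  have "inverse (1 - 3 * fps_X + fps_X ^ 2) = Abs_fps (\<lambda>n. of_nat (fib (2 * n + 2)) :: 'a)"
    by (rule fps_inverse_unique) (subst mult.commute, rule even_fib_fps_times)
  moreover have "fps_X ^ k / (1 - 3 * fps_X + fps_X ^ 2)
      = fps_X ^ k * inverse (1 - 3 * fps_X + fps_X ^ 2 :: 'a fps)"
    by (rule fps_divide_unit) simp
  ultimately show ?thesis
    by (simp add: fps_eq_iff fps_X_power_mult_nth)
qed

lemma fps_inverse_one_minus_divide:
  fixes e f :: "'a::field fps"
  assumes e0: "e $ 0 \<noteq> 0" and f0: "f $ 0 = 0"
  shows "inverse (1 - f / (e + f)) = 1 + f / e"
proof -
  have d0: "(e + f) $ 0 \<noteq> 0" using e0 f0 by simp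
  have "1 - f / (e + f) = ((e + f) - f) * inverse (e + f)"
    using inverse_mult_eq_1'[OF d0] by (simp add: fps_divide_unit[OF d0] algebra_simps)
  moreover have "1 + f / e = (e + f) * inverse e"
    using inverse_mult_eq_1'[OF e0] by (simp add: fps_divide_unit[OF e0] algebra_simps)
  ultimately have "(1 - f / (e + f)) * (1 + f / e) = (e * inverse (e + f)) * ((e + f) * inverse e)"
    by simp
  also have "\<dots> = (e * inverse e) * ((e + f) * inverse (e + f))"
    by (simp only: ac_simps)
  also have "\<dots> = 1"
    using inverse_mult_eq_1'[OF e0] inverse_mult_eq_1'[OF d0] by simp
  finally show ?thesis by (rule fps_inverse_unique)
qed

lemma fps_eq_divide_if_eq_one_plus_times:
  fixes e f m p :: "'a::field fps"
  assumes e0: "e $ 0 \<noteq> 0" and f0: "f $ 0 = 0"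
    and m: "m = 1 + p * m" and mfe: "m = 1 + f / e"
  shows "p = f / (e + f)"
proof -
  have g0: "(1 - f / (e + f)) $ 0 \<noteq> 0" using e0 f0 by simp
  have "(1 - p) * m = 1" using m by (simp add: algebra_simps)
  then have "1 - p = inverse m" by (metis fps_inverse_unique mult.commute)
  also have "\<dots> = 1 - f / (e + f)"
    unfolding mfe fps_inverse_one_minus_divide[OF e0 f0, symmetric] by (rule fps_inverse_idempotent[OF g0])
  finally show ?thesis by simp
qed

section \<open>Fibonacci compositions\<close>

lemma fib_comp_append [simp]: "fib_comp (a @ b) \<longleftrightarrow> fib_comp a \<and> fib_comp b"
  by (auto simp: fib_comp_def)

lemma fib_comp_Cons [simp]: "fib_comp (x # c) \<longleftrightarrow> (x = 1 \<or> x = 2) \<and> fib_comp c"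
  by (auto simp: fib_comp_def)

lemma fib_comp_Nil [simp]: "fib_comp []"
  by (simp add: fib_comp_def)

lemma fib_comp_replicate_2 [simp]: "fib_comp (replicate n 2)"
  by (induction n) auto

lemma length_le_sum_list_if_fib_comp: "fib_comp c \<Longrightarrow> length c \<le> sum_list c"
  by (induction c) auto

lemma fib_comp_sum_list_eq_0_iff: "fib_comp c \<Longrightarrow> sum_list c = 0 \<longleftrightarrow> c = []"
  by (cases c) auto

lemma fib_comp_leading_2s_cases:
  assumes "fib_comp x"
  obtains a where "x = replicate a 2"
    | a s where "x = replicate a 2 @ 1 # s" "fib_comp s"
  using assms
proof (induction x arbitrary: thesis)
  case Nil
  then show ?case by (metis replicate_0)
next
  case (Cons y x)
  show ?case
  proof (cases "y = 1")
    case True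
    then show ?thesis using Cons.prems by (metis append_Nil fib_comp_Cons replicate_0)
  next
    case False
    then have "y = 2" using Cons.prems by simp
    show ?thesis
      using Cons.IH[of thesis] Cons.prems \<open>y = 2\<close> by (metis append_Cons fib_comp_Cons replicate_Suc)
  qed
qed

lemma finite_fib_comps: "finite {c. fib_comp c \<and> sum_list c = m}"
proof (rule finite_subset)
  show "{c. fib_comp c \<and> sum_list c = m} \<subseteq> {c. set c \<subseteq> {1, 2} \<and> length c \<le> m}"
    using length_le_sum_list_if_fib_comp by (auto simp: fib_comp_def)
  show "finite {c. set c \<subseteq> {1::nat, 2} \<and> length c \<le> m}"
    by (rule finite_lists_length_le) simp
qed

lemma fib_comps_Suc_Suc:
  "{c. fib_comp c \<and> sum_list c = Suc (Suc n)}
     = Cons 1 ` {c. fib_comp c \<and> sum_list c = Suc n} \<union> Cons 2 ` {c. fib_comp c \<and> sum_list c = n}"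
proof (rule set_eqI, rule iffI)
  fix c assume "c \<in> {c. fib_comp c \<and> sum_list c = Suc (Suc n)}"
  then show "c \<in> Cons 1 ` {c. fib_comp c \<and> sum_list c = Suc n} \<union> Cons 2 ` {c. fib_comp c \<and> sum_list c = n}"
    by (cases c) auto
qed auto

lemma card_fib_comps: "card {c. fib_comp c \<and> sum_list c = m} = fib (m + 1)"
proof (induction m rule: fib.induct)
  case 1
  have "{c. fib_comp c \<and> sum_list c = 0} = {[]}"
    using fib_comp_sum_list_eq_0_iff by auto
  then show ?case by simp
next
  case 2
  have "{c. fib_comp c \<and> sum_list c = Suc 0} = {[1]}"
  proof (rule set_eqI, rule iffI)
    fix c assume "c \<in> {c. fib_comp c \<and> sum_list c = Suc 0}"
    then obtain c' where "c = 1 # c'" "fib_comp c'" "sum_list c' = 0" by (cases c) auto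
    then show "c \<in> {[1]}" using fib_comp_sum_list_eq_0_iff by simp
  qed auto
  then show ?case by simp
next
  case (3 n)
  have "card {c. fib_comp c \<and> sum_list c = Suc (Suc n)}
      = card {c. fib_comp c \<and> sum_list c = Suc n} + card {c. fib_comp c \<and> sum_list c = n}"
    unfolding fib_comps_Suc_Suc
    by (subst card_Un_disjoint) (auto intro: finite_fib_comps simp: card_image)
  with 3 show ?case by simp
qed

section \<open>Free submonoids of compositions\<close>

definition submonoid :: "nat list set \<Rightarrow> bool" where
  "submonoid M \<longleftrightarrow> [] \<in> M \<and> (\<forall>a\<in>M. \<forall>b\<in>M. a @ b \<in> M)"

text \<open>Schutzenberger's stability condition.\<close>

definition stable_submonoid :: "nat list set \<Rightarrow> bool" where
  "stable_submonoid M \<longleftrightarrow>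
     submonoid M \<and> (\<forall>u v w. u \<in> M \<longrightarrow> u @ v \<in> M \<longrightarrow> v @ w \<in> M \<longrightarrow> w \<in> M \<longrightarrow> v \<in> M)"

lemma concat_in_submonoid: "submonoid M \<Longrightarrow> set xs \<subseteq> M \<Longrightarrow> concat xs \<in> M"
  by (induction xs) (auto simp: submonoid_def)

lemma prime_factorization_exists:
  "c \<in> M \<Longrightarrow> \<exists>ps. set ps \<subseteq> {p. prime_of M p} \<and> concat ps = c"
proof (induction "length c" arbitrary: c rule: less_induct)
  case less
  consider "c = []" | "prime_of M c" | "c \<noteq> []" "\<not> prime_of M c" by blast
  then show ?case
  proof cases
    case 1
    then show ?thesis by (intro exI[of _ "[]"]) simp
  next
    case 2
    then show ?thesis by (intro exI[of _ "[c]"]) simp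
  next
    case 3
    then obtain a b where ab: "a \<in> M" "b \<in> M" "c = a @ b" "a \<noteq> []" "b \<noteq> []"
      using less.prems by (auto simp: prime_of_def)
    then have "length a < length c" "length b < length c" by auto
    with less.hyps ab obtain pa pb where
      "set pa \<subseteq> {p. prime_of M p}" "concat pa = a" "set pb \<subseteq> {p. prime_of M p}" "concat pb = b"
      by metis
    then show ?thesis using ab by (intro exI[of _ "pa @ pb"]) auto
  qed
qed

lemma stable_prime_prefix_unique:
  assumes stable: "stable_submonoid M"
    and p: "prime_of M p" and p': "prime_of M p'" and r: "r \<in> M" and r': "r' \<in> M"
    and eq: "p @ r = p' @ r'"
  shows "p = p'"
proof -
  have extend: "u = []" if q: "prime_of M q" and qu: "prime_of M (q @ u)"
    and us: "u @ s \<in> M" and s: "s \<in> M" for q u s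
  proof -
    have "q \<in> M" "q \<noteq> []" "q @ u \<in> M" using q qu by (simp_all add: prime_of_def)
    moreover from this have "u \<in> M"
      using stable us s unfolding stable_submonoid_def by blast
    ultimately show ?thesis using qu unfolding prime_of_def by blast
  qed
  obtain u where "p = p' @ u \<and> u @ r = r' \<or> p @ u = p' \<and> r = u @ r'"
    using eq by (auto simp: append_eq_append_conv2)
  then show ?thesis
  proof
    assume "p = p' @ u \<and> u @ r = r'"
    then show ?thesis using extend[of p' u r] p p' r' r by simp
  next
    assume "p @ u = p' \<and> r = u @ r'"
    then show ?thesis using extend[of p u r'] p p' r' r by simp
  qed
qed

lemma free_monoid_if_stable:
  assumes stable: "stable_submonoid M"
  shows "free_monoid M"
proof -
  have sub: "submonoid M" using stable by (simp add: stable_submonoid_def)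
  have "ps = ps'" if "set ps \<subseteq> {p. prime_of M p}" "set ps' \<subseteq> {p. prime_of M p}"
    "concat ps = concat ps'" for ps ps'
    using that
  proof (induction ps arbitrary: ps')
    case Nil
    then show ?case by (cases ps') (auto simp: prime_of_def)
  next
    case (Cons p ps)
    then obtain p' ps'' where ps': "ps' = p' # ps''"
      by (cases ps') (auto simp: prime_of_def)
    have "concat ps \<in> M" "concat ps'' \<in> M"
      using Cons.prems ps' by (auto intro!: concat_in_submonoid[OF sub] simp: prime_of_def)
    then have "p = p'"
      using stable_prime_prefix_unique[OF stable, of p p'] Cons.prems ps' by auto
    with Cons show ?case using ps' by auto
  qed
  with sub prime_factorization_exists show ?thesis
    unfolding free_monoid_def submonoid_def by (metis (no_types, lifting))
qed

lemma free_monoid_prime_prefix_unique: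
  assumes free: "free_monoid M" and "prime_of M p" "prime_of M p'" "r \<in> M" "r' \<in> M"
    and eq: "p @ r = p' @ r'"
  shows "p = p'"
proof -
  obtain rs rs' where rs: "set rs \<subseteq> {p. prime_of M p}" "concat rs = r"
    and rs': "set rs' \<subseteq> {p. prime_of M p}" "concat rs' = r'"
    using prime_factorization_exists assms(4,5) by metis
  have "p @ r \<in> M" using free assms(2,4) by (auto simp: free_monoid_def prime_of_def)
  then have "\<exists>!ps. set ps \<subseteq> {p. prime_of M p} \<and> concat ps = p @ r"
    using free by (simp add: free_monoid_def)
  moreover have "set (p # rs) \<subseteq> {p. prime_of M p} \<and> concat (p # rs) = p @ r"
    using assms(2) rs by simp
  moreover have "set (p' # rs') \<subseteq> {p. prime_of M p} \<and> concat (p' # rs') = p @ r"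
    using assms(3) rs' eq by simp
  ultimately have "p # rs = p' # rs'" by blast
  then show ?thesis by simp
qed

lemma submonoid_if_free_monoid: "free_monoid M \<Longrightarrow> submonoid M"
  by (simp add: free_monoid_def submonoid_def)

lemma free_monoid_first_prime:
  assumes free: "free_monoid M" and c: "c \<in> M" "c \<noteq> []"
  obtains p r where "prime_of M p" "r \<in> M" "c = p @ r"
proof -
  obtain ps where ps: "set ps \<subseteq> {p. prime_of M p}" "concat ps = c"
    using prime_factorization_exists[OF c(1)] by blast
  then obtain p ps' where pps: "ps = p # ps'" using c(2) by (cases ps) auto
  have "concat ps' \<in> M"
    using ps pps by (auto intro!: concat_in_submonoid[OF submonoid_if_free_monoid[OF free]]
        simp: prime_of_def)
  moreover have "prime_of M p" "c = p @ concat ps'" using ps pps by auto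
  ultimately show thesis using that by blast
qed

lemma card_free_monoid_convolution:
  assumes free: "free_monoid M" and M: "\<And>c. c \<in> M \<Longrightarrow> fib_comp c \<and> even (sum_list c)"
    and n: "n \<ge> 1"
  shows "card {c \<in> M. sum_list c = 2 * n}
    = (\<Sum>i=0..n. card {p. prime_of M p \<and> sum_list p = 2 * i} * card {c \<in> M. sum_list c = 2 * (n - i)})"
proof -
  define A where "A i = {p. prime_of M p \<and> sum_list p = 2 * i}" for i
  define B where "B i = {c \<in> M. sum_list c = 2 * i}" for i
  have closed: "a @ b \<in> M" if "a \<in> M" "b \<in> M" for a b
    using submonoid_if_free_monoid[OF free] that by (simp add: submonoid_def)
  have finA: "finite (A i)" for i
    by (rule finite_subset[OF _ finite_fib_comps]) (auto simp: A_def prime_of_def dest: M)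
  have finB: "finite (B i)" for i
    by (rule finite_subset[OF _ finite_fib_comps]) (auto simp: B_def dest: M)
  have split: "B n = (\<lambda>(p, r). p @ r) ` (\<Union>i\<in>{0..n}. A i \<times> B (n - i))"
  proof (rule set_eqI, rule iffI)
    fix c assume c: "c \<in> B n"
    then have cM: "c \<in> M" and sc: "sum_list c = 2 * n" by (auto simp: B_def)
    then have "c \<noteq> []" using n by auto
    then obtain p r where p: "prime_of M p" and r: "r \<in> M" and c_eq: "c = p @ r"
      using free_monoid_first_prime[OF free cM] by blast
    moreover obtain i j where "sum_list p = 2 * i" "sum_list r = 2 * j"
      using M p r by (metis prime_of_def evenE)
    ultimately have "i \<le> n" "(p, r) \<in> A i \<times> B (n - i)"
      using sc by (auto simp: A_def B_def)
    then show "c \<in> (\<lambda>(p, r). p @ r) ` (\<Union>i\<in>{0..n}. A i \<times> B (n - i))"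
      using c_eq by force
  next
    fix c assume "c \<in> (\<lambda>(p, r). p @ r) ` (\<Union>i\<in>{0..n}. A i \<times> B (n - i))"
    then obtain i p r where "i \<le> n" "p \<in> A i" "r \<in> B (n - i)" "c = p @ r" by auto
    moreover from this have "p \<in> M" by (simp add: A_def prime_of_def)
    ultimately show "c \<in> B n" using closed by (auto simp: A_def B_def)
  qed
  have inj: "inj_on (\<lambda>(p, r). p @ r) (\<Union>i\<in>{0..n}. A i \<times> B (n - i))"
  proof (rule inj_onI, clarify)
    fix p r p' r' i i'
    assume "p \<in> A i" "r \<in> B (n - i)" "p' \<in> A i'" "r' \<in> B (n - i')" "p @ r = p' @ r'"
    moreover from this have "p = p'"
      using free_monoid_prime_prefix_unique[OF free] by (auto simp: A_def B_def)
    ultimately show "p = p' \<and> r = r'" by simp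
  qed
  have disjoint: "A i \<inter> A j = {}" if "i \<noteq> j" for i j
    using that by (auto simp: A_def)
  have "card (B n) = (\<Sum>i=0..n. card (A i \<times> B (n - i)))"
    unfolding split card_image[OF inj]
    using finA finB disjoint by (intro card_UN_disjoint) blast+
  then show ?thesis by (simp add: card_cartesian_product A_def B_def)
qed

lemma gen_fun_free_monoid:
  assumes free: "free_monoid M" and M: "\<And>c. c \<in> M \<Longrightarrow> fib_comp c \<and> even (sum_list c)"
  shows "gen_fun M = 1 + gen_fun {p. prime_of M p} * gen_fun M"
proof (rule fps_ext)
  fix n
  show "gen_fun M $ n = (1 + gen_fun {p. prime_of M p} * gen_fun M) $ n"
  proof (cases "n = 0")
    case True
    have M0: "{c \<in> M. sum_list c = 0} = {[]}" and P0: "{p. prime_of M p \<and> sum_list p = 0} = {}"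
      using free fib_comp_sum_list_eq_0_iff
      by (auto simp: free_monoid_def prime_of_def simp del: sum_list_eq_0_iff dest: M)
    show ?thesis using True by (simp add: gen_fun_def M0 P0 del: sum_list_eq_0_iff)
  next
    case False
    then show ?thesis
      using card_free_monoid_convolution[OF free M, of n]
      by (simp add: gen_fun_def fps_mult_nth of_nat_sum)
  qed
qed

section \<open>The monoid of compositions starting with (1, 2, ..., 2)\<close>

abbreviation M_prefix :: "nat \<Rightarrow> nat list" where
  "M_prefix k \<equiv> 1 # replicate (k - 1) 2"

lemma fib_comp_even_if_in_M_set: "c \<in> M_set k \<Longrightarrow> fib_comp c \<and> even (sum_list c)"
  by (auto simp: M_set_def)

lemma M_set_iff:
  "c \<in> M_set k \<longleftrightarrow> c = [] \<or> (\<exists>t. c = M_prefix k @ t \<and> fib_comp t \<and> odd (sum_list t))"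
proof -
  have parity: "even (sum_list (M_prefix k @ t)) \<longleftrightarrow> odd (sum_list t)" for t
    by (simp add: sum_list_replicate)
  have "fib_comp c \<and> even (sum_list c) \<and> (\<exists>r. c = M_prefix k @ r) \<longleftrightarrow>
      (\<exists>t. c = M_prefix k @ t \<and> fib_comp t \<and> odd (sum_list t))"
  proof
    assume "fib_comp c \<and> even (sum_list c) \<and> (\<exists>r. c = M_prefix k @ r)"
    then obtain r where "c = M_prefix k @ r" "fib_comp c" "even (sum_list c)" by blast
    then show "\<exists>t. c = M_prefix k @ t \<and> fib_comp t \<and> odd (sum_list t)"
      using parity[of r] by auto
  next
    assume "\<exists>t. c = M_prefix k @ t \<and> fib_comp t \<and> odd (sum_list t)"
    then obtain t where "c = M_prefix k @ t" "fib_comp t" "odd (sum_list t)" by blast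
    then show "fib_comp c \<and> even (sum_list c) \<and> (\<exists>r. c = M_prefix k @ r)"
      using parity[of t] by auto
  qed
  then show ?thesis by (simp add: M_set_def)
qed

lemma even_prefix_extends_M_prefix:
  assumes "u \<noteq> []" "even (sum_list u)" "u @ v = M_prefix k @ w"
  shows "\<exists>r. u = M_prefix k @ r"
proof -
  obtain r where "u = M_prefix k @ r \<or> u @ r = M_prefix k"
    using append_eq_append_conv2[THEN iffD1, OF assms(3)] by blast
  moreover have "u @ r \<noteq> M_prefix k"
  proof
    assume "u @ r = M_prefix k"
    with assms(1) obtain u' where "u = 1 # u'" "u' @ r = replicate (k - 1) 2"
      by (cases u) auto
    then have "\<forall>x\<in>set u'. x = 2" by (metis UnI1 in_set_replicate set_append)
    then have "u' = replicate (length u') 2" by (simp add: replicate_length_same)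
    then have "sum_list u = 1 + 2 * length u'"
      using \<open>u = 1 # u'\<close> by (metis sum_list.Cons sum_list_replicate mult.commute of_nat_id)
    with assms(2) show False by simp
  qed
  ultimately show ?thesis by blast
qed

lemma stable_submonoid_M_set: "stable_submonoid (M_set k)"
  unfolding stable_submonoid_def submonoid_def
proof (intro conjI ballI allI impI)
  show "[] \<in> M_set k" by (simp add: M_set_def)
  show "a @ b \<in> M_set k" if "a \<in> M_set k" "b \<in> M_set k" for a b
    using that by (auto simp: M_set_def)
  fix u v w
  assume u: "u \<in> M_set k" and uv: "u @ v \<in> M_set k" and vw: "v @ w \<in> M_set k"
  show "v \<in> M_set k"
  proof (cases "v = []")
    case False
    then obtain r where "v @ w = M_prefix k @ r" using vw by (auto simp: M_set_def)
    moreover have "fib_comp v" "even (sum_list v)" using fib_comp_even_if_in_M_set[OF u] fib_comp_even_if_in_M_set[OF uv] by auto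
    ultimately show ?thesis using even_prefix_extends_M_prefix[OF False] by (auto simp: M_set_def)
  qed (simp add: M_set_def)
qed

lemma free_monoid_M_set: "free_monoid (M_set k)"
  by (rule free_monoid_if_stable[OF stable_submonoid_M_set])

definition occurs_at_parity :: "nat list \<Rightarrow> bool \<Rightarrow> nat list \<Rightarrow> bool" where
  "occurs_at_parity w e t \<longleftrightarrow> (\<exists>t1 r. t = t1 @ w @ r \<and> even (sum_list t1) = e)"

lemma not_occurs_at_parity_Nil [simp]: "w \<noteq> [] \<Longrightarrow> \<not> occurs_at_parity w e []"
  by (simp add: occurs_at_parity_def)

lemma occurs_at_parity_Cons:
  "occurs_at_parity w e (x # t) \<longleftrightarrow> e \<and> (\<exists>r. x # t = w @ r) \<or> occurs_at_parity w (e = even x) t"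
proof
  assume "occurs_at_parity w e (x # t)"
  then obtain t1 r where t1: "x # t = t1 @ w @ r" "even (sum_list t1) = e"
    by (auto simp: occurs_at_parity_def)
  show "e \<and> (\<exists>r. x # t = w @ r) \<or> occurs_at_parity w (e = even x) t"
  proof (cases t1)
    case Nil
    then show ?thesis using t1 by auto
  next
    case (Cons y t1')
    then have "t = t1' @ w @ r" "even (sum_list t1') = (e = even x)" using t1 by auto
    then show ?thesis unfolding occurs_at_parity_def by blast
  qed
next
  assume "e \<and> (\<exists>r. x # t = w @ r) \<or> occurs_at_parity w (e = even x) t"
  then show "occurs_at_parity w e (x # t)"
  proof
    assume "e \<and> (\<exists>r. x # t = w @ r)"
    then show ?thesis unfolding occurs_at_parity_def by (metis append_Nil sum_list.Nil even_zero)
  next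
    assume "occurs_at_parity w (e = even x) t"
    then obtain t1 r where "t = t1 @ w @ r" "even (sum_list t1) = (e = even x)"
      by (auto simp: occurs_at_parity_def)
    then have "x # t = (x # t1) @ w @ r" "even (sum_list (x # t1)) = e" by auto
    then show ?thesis unfolding occurs_at_parity_def by blast
  qed
qed

lemma occurs_at_parity_replicate_2 [simp]:
  assumes "w \<noteq> []" "hd w \<noteq> 2"
  shows "occurs_at_parity w e (replicate m 2 @ t) \<longleftrightarrow> occurs_at_parity w e t"
  using assms by (induction m) (auto simp: occurs_at_parity_Cons neq_Nil_conv)

lemma prime_of_M_set_iff_not_occurs:
  assumes c: "c \<in> M_set k" "c \<noteq> []"
  shows "prime_of (M_set k) c \<longleftrightarrow> \<not> occurs_at_parity (M_prefix k) False (tl c)"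
proof -
  txt \<open>Removing the leading \<open>1\<close> of \<open>c\<close> flips parities: split points of \<open>c\<close> after an even sum
    are the positions in \<open>tl c\<close> after an odd sum.\<close>
  obtain t where t: "c = M_prefix k @ t" using c by (auto simp: M_set_def)
  have fc: "fib_comp c" and ec: "even (sum_list c)" using fib_comp_even_if_in_M_set[OF c(1)] by auto
  have "(\<exists>a b. a \<in> M_set k \<and> b \<in> M_set k \<and> c = a @ b \<and> a \<noteq> [] \<and> b \<noteq> [])
      \<longleftrightarrow> occurs_at_parity (M_prefix k) False (tl c)"
  proof
    assume "\<exists>a b. a \<in> M_set k \<and> b \<in> M_set k \<and> c = a @ b \<and> a \<noteq> [] \<and> b \<noteq> []"
    then obtain a b where ab: "a \<in> M_set k" "b \<in> M_set k" "c = a @ b" "a \<noteq> []" "b \<noteq> []"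
      by blast
    then obtain ra rb where "a = M_prefix k @ ra" "b = M_prefix k @ rb"
      by (auto simp: M_set_def)
    moreover have "even (sum_list a)" using ab(1) by (auto simp: M_set_def)
    ultimately have "tl c = (replicate (k - 1) 2 @ ra) @ M_prefix k @ rb"
      and "even (sum_list (replicate (k - 1) 2 @ ra)) = False"
      using ab(3) by auto
    then show "occurs_at_parity (M_prefix k) False (tl c)"
      unfolding occurs_at_parity_def by blast
  next
    assume "occurs_at_parity (M_prefix k) False (tl c)"
    then obtain t1 r where t1: "tl c = t1 @ M_prefix k @ r" "odd (sum_list t1)"
      by (auto simp: occurs_at_parity_def)
    define a where "a = 1 # t1"
    define b where "b = M_prefix k @ r"
    have cab: "c = a @ b" using t t1 by (simp add: a_def b_def)
    have ea: "even (sum_list a)" using t1 by (simp add: a_def)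
    have "fib_comp a" "fib_comp b" using fc cab by auto
    moreover have "even (sum_list b)" using ec ea cab by simp
    moreover have "a \<noteq> []" "a @ b = M_prefix k @ t" using cab t by (simp_all add: a_def)
    then obtain ra where "a = M_prefix k @ ra"
      using even_prefix_extends_M_prefix[OF _ ea] by blast
    ultimately have "a \<in> M_set k" "b \<in> M_set k" using ea by (auto simp: M_set_def b_def)
    then show "\<exists>a b. a \<in> M_set k \<and> b \<in> M_set k \<and> c = a @ b \<and> a \<noteq> [] \<and> b \<noteq> []"
      using cab by (auto simp: a_def b_def)
  qed
  then show ?thesis using c unfolding prime_of_def by blast
qed

lemma prime_of_M_set_iff:
  "prime_of (M_set k) c \<longleftrightarrow>
     (\<exists>t. c = M_prefix k @ t \<and> fib_comp t \<and> odd (sum_list t) \<and> \<not> occurs_at_parity (M_prefix k) False t)"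
proof -
  have tl: "tl (M_prefix k @ t) = replicate (k - 1) 2 @ t" for t by simp
  show ?thesis
  proof
    assume prime: "prime_of (M_set k) c"
    then have c: "c \<in> M_set k" "c \<noteq> []" by (simp_all add: prime_of_def)
    then obtain t where t: "c = M_prefix k @ t" "fib_comp t" "odd (sum_list t)"
      unfolding M_set_iff by blast
    have "\<not> occurs_at_parity (M_prefix k) False t"
      using prime prime_of_M_set_iff_not_occurs[OF c] unfolding t(1) tl by simp
    with t show "\<exists>t. c = M_prefix k @ t \<and> fib_comp t \<and> odd (sum_list t) \<and>
        \<not> occurs_at_parity (M_prefix k) False t" by blast
  next
    assume "\<exists>t. c = M_prefix k @ t \<and> fib_comp t \<and> odd (sum_list t) \<and>
        \<not> occurs_at_parity (M_prefix k) False t"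
    then obtain t where t: "c = M_prefix k @ t" "fib_comp t" "odd (sum_list t)"
      "\<not> occurs_at_parity (M_prefix k) False t" by blast
    then have c: "c \<in> M_set k" "c \<noteq> []" unfolding M_set_iff by auto
    show "prime_of (M_set k) c"
      using prime_of_M_set_iff_not_occurs[OF c] t(4) unfolding t(1) tl by simp
  qed
qed

lemma replicate_2_prefix_iff:
  "(\<exists>r. replicate j 2 @ 1 # s = replicate m (2::nat) @ r) \<longleftrightarrow> m \<le> j"
proof (induction j arbitrary: m)
  case 0
  then show ?case by (cases m) auto
next
  case (Suc j)
  then show ?case by (cases m) auto
qed

lemma occurs_at_parity_M_prefix_block:
  "occurs_at_parity (M_prefix k) False (1 # replicate l 2 @ 1 # replicate j 2 @ 1 # s)
     \<longleftrightarrow> k \<le> j + 1 \<or> occurs_at_parity (M_prefix k) False (1 # s)"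
proof -
  have "occurs_at_parity (M_prefix k) False (1 # replicate l 2 @ 1 # replicate j 2 @ 1 # s)
      \<longleftrightarrow> occurs_at_parity (M_prefix k) True (1 # replicate j 2 @ 1 # s)"
    by (simp add: occurs_at_parity_Cons)
  also have "\<dots> \<longleftrightarrow> (\<exists>r. replicate j 2 @ 1 # s = replicate (k - 1) 2 @ r)
      \<or> occurs_at_parity (M_prefix k) False (1 # s)"
    by (simp add: occurs_at_parity_Cons)
  finally show ?thesis unfolding replicate_2_prefix_iff by linarith
qed

lemma not_occurs_at_parity_M_prefix_last: "\<not> occurs_at_parity (M_prefix k) False (1 # replicate j 2)"
  using occurs_at_parity_replicate_2[of "M_prefix k" True j "[]"] by (simp add: occurs_at_parity_Cons)

lemma Nil_in_Q_set: "[] \<in> Q_set k"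
  unfolding Q_set_def by (auto intro: exI[of _ "[]"])

lemma Q_prime_append_in_Q_set: "p \<in> Q_primes k \<Longrightarrow> q \<in> Q_set k \<Longrightarrow> p @ q \<in> Q_set k"
proof -
  assume "p \<in> Q_primes k" "q \<in> Q_set k"
  then obtain ps where "set (p # ps) \<subseteq> Q_primes k" "p @ q = concat (p # ps)"
    unfolding Q_set_def by auto
  then show "p @ q \<in> Q_set k" unfolding Q_set_def by blast
qed

lemma fib_comp_even_if_in_Q_set:
  assumes "q \<in> Q_set k"
  shows "fib_comp q \<and> even (sum_list q)"
proof -
  obtain ps where "set ps \<subseteq> Q_primes k" "q = concat ps"
    using assms unfolding Q_set_def by blast
  then show ?thesis
    by (induction ps arbitrary: q) (auto simp: Q_primes_def sum_list_replicate)
qed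

lemma Q_set_decomposition:
  assumes "fib_comp s" "even (sum_list s)" "\<not> occurs_at_parity (M_prefix k) False (1 # s)"
  shows "\<exists>q j. q \<in> Q_set k \<and> 1 # s = q @ 1 # replicate j 2"
  using assms
proof (induction "length s" arbitrary: s rule: less_induct)
  case less
  from \<open>fib_comp s\<close> show ?case
  proof (cases rule: fib_comp_leading_2s_cases)
    case (1 l)
    then show ?thesis using Nil_in_Q_set by fastforce
  next
    case (2 l w)
    from \<open>fib_comp w\<close> show ?thesis
    proof (cases rule: fib_comp_leading_2s_cases)
      case (1 j)
      then have "odd (sum_list s)" using 2 by (simp add: sum_list_replicate)
      with less.prems show ?thesis by simp
    next
      case (2 j v)
      have s: "1 # s = 1 # replicate l 2 @ 1 # replicate j 2 @ 1 # v"
        using \<open>s = _\<close> \<open>w = _\<close> by simp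
      then have "\<not> k \<le> j + 1" and v_free: "\<not> occurs_at_parity (M_prefix k) False (1 # v)"
        using less.prems(3) occurs_at_parity_M_prefix_block by simp_all
      then have block: "1 # replicate l 2 @ 1 # replicate j 2 \<in> Q_primes k"
        unfolding Q_primes_def by fastforce
      have "length v < length s" "even (sum_list v)"
        using s less.prems(2) by (auto simp: sum_list_replicate)
      then obtain q j' where "q \<in> Q_set k" "1 # v = q @ 1 # replicate j' 2"
        using less.hyps \<open>fib_comp v\<close> v_free by blast
      then show ?thesis
        using s Q_prime_append_in_Q_set[OF block] by (metis append.assoc append_Cons)
    qed
  qed
qed

lemma not_occurs_at_parity_Q_set:
  assumes "q \<in> Q_set k"
  shows "\<not> occurs_at_parity (M_prefix k) False (q @ 1 # replicate j 2)"
proof -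
  obtain ps where "set ps \<subseteq> Q_primes k" "q = concat ps"
    using assms unfolding Q_set_def by blast
  then show ?thesis
  proof (induction ps arbitrary: q)
    case Nil
    then show ?case using not_occurs_at_parity_M_prefix_last by simp
  next
    case (Cons p ps)
    then obtain l j' where p: "p = 1 # replicate l 2 @ 1 # replicate j' 2" "j' + 2 \<le> k"
      by (auto simp: Q_primes_def)
    obtain s where s: "concat ps @ 1 # replicate j 2 = 1 # s"
      using Cons.prems(1) by (cases ps) (auto simp: Q_primes_def)
    have "\<not> occurs_at_parity (M_prefix k) False (1 # s)"
      using Cons s by simp
    then show ?case
      using Cons.prems(2) p s occurs_at_parity_M_prefix_block[of k l j' s] by simp
  qed
qed

lemma prime_of_M_set_tail_iff:
  "fib_comp t \<and> odd (sum_list t) \<and> \<not> occurs_at_parity (M_prefix k) False t \<longleftrightarrow>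
     (\<exists>i q j. q \<in> Q_set k \<and> t = replicate i 2 @ q @ 1 # replicate j 2)"
proof
  assume t: "fib_comp t \<and> odd (sum_list t) \<and> \<not> occurs_at_parity (M_prefix k) False t"
  then have "fib_comp t" by simp
  then show "\<exists>i q j. q \<in> Q_set k \<and> t = replicate i 2 @ q @ 1 # replicate j 2"
  proof (cases rule: fib_comp_leading_2s_cases)
    case (1 i)
    then show ?thesis using t by (simp add: sum_list_replicate)
  next
    case (2 i s)
    then have "even (sum_list s)" "\<not> occurs_at_parity (M_prefix k) False (1 # s)"
      using t by (simp_all add: sum_list_replicate)
    then show ?thesis using Q_set_decomposition \<open>fib_comp s\<close> 2(1) by fastforce
  qed
next
  assume "\<exists>i q j. q \<in> Q_set k \<and> t = replicate i 2 @ q @ 1 # replicate j 2"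
  then obtain i q j where "q \<in> Q_set k" "t = replicate i 2 @ q @ 1 # replicate j 2" by blast
  then show "fib_comp t \<and> odd (sum_list t) \<and> \<not> occurs_at_parity (M_prefix k) False t"
    using fib_comp_even_if_in_Q_set not_occurs_at_parity_Q_set by (auto simp: sum_list_replicate)
qed

lemma primes_M_set: "{c. prime_of (M_set k) c} = P_set k"
  unfolding P_set_def prime_of_M_set_iff prime_of_M_set_tail_iff by auto

lemma card_M_set_sum_list:
  assumes k: "k \<ge> 1"
  shows "card {c \<in> M_set k. sum_list c = 2 * n} =
     (if n = 0 then 1 else if k \<le> n then fib (2 * (n - k) + 2) else 0)"
proof (cases "n = 0")
  case True
  then have "{c \<in> M_set k. sum_list c = 2 * n} = {[]}"
    using fib_comp_sum_list_eq_0_iff by (auto simp: M_set_def simp del: sum_list_eq_0_iff)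
  then show ?thesis using True by simp
next
  case False
  have sum_prefix: "sum_list (M_prefix k @ t) = sum_list t + (2 * k - 1)" for t
    using k by (cases k) (auto simp: sum_list_replicate)
  have "{c \<in> M_set k. sum_list c = 2 * n} =
      (\<lambda>t. M_prefix k @ t) ` {t. fib_comp t \<and> sum_list t + (2 * k - 1) = 2 * n}"
  proof (rule set_eqI, rule iffI)
    fix c assume "c \<in> {c \<in> M_set k. sum_list c = 2 * n}"
    then obtain t where "c = M_prefix k @ t" "fib_comp t" "sum_list c = 2 * n"
      using False unfolding M_set_iff by auto
    then show "c \<in> (\<lambda>t. M_prefix k @ t) ` {t. fib_comp t \<and> sum_list t + (2 * k - 1) = 2 * n}"
      by (simp only: sum_prefix) blast
  next
    fix c assume "c \<in> (\<lambda>t. M_prefix k @ t) ` {t. fib_comp t \<and> sum_list t + (2 * k - 1) = 2 * n}"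
    then obtain t where t: "c = M_prefix k @ t" "fib_comp t" "sum_list t + (2 * k - 1) = 2 * n"
      by blast
    moreover from t(3) k have "odd (sum_list t)" by presburger
    ultimately show "c \<in> {c \<in> M_set k. sum_list c = 2 * n}"
      unfolding M_set_iff by (simp only: sum_prefix mem_Collect_eq) blast
  qed
  moreover have "inj (\<lambda>t. M_prefix k @ t)" by (rule injI) simp
  moreover have "{t. fib_comp t \<and> sum_list t + (2 * k - 1) = 2 * n} =
      (if k \<le> n then {t. fib_comp t \<and> sum_list t = 2 * (n - k) + 1} else {})"
    using k by auto
  ultimately show ?thesis
    using False card_fib_comps by (simp add: card_image inj_on_subset[of _ UNIV])
qed

lemma gen_fun_M_set:
  assumes "k \<ge> 1"
  shows "gen_fun (M_set k) = 1 + fps_X ^ k / (1 - 3 * fps_X + fps_X ^ 2)"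
  unfolding fps_X_power_divide_even_fib
  by (rule fps_ext) (use assms in \<open>simp add: gen_fun_def card_M_set_sum_list\<close>)

theorem proposition11:
  fixes k :: nat
  assumes "k \<ge> 1"
  shows "free_monoid (M_set k)
    \<and> {c. prime_of (M_set k) c} = P_set k
    \<and> (\<forall>n. finite {c \<in> P_set k. sum_list c = 2 * n})
    \<and> gen_fun (P_set k) = fps_X ^ k / (1 - 3 * fps_X + fps_X ^ 2 + fps_X ^ k)
    \<and> 1 + Abs_fps (\<lambda>m. if k \<le> m then of_nat (fib (2 * (m - k) + 2)) else 0)
        = (1 + fps_X ^ k / (1 - 3 * fps_X + fps_X ^ 2) :: rat fps)
    \<and> (1 + fps_X ^ k / (1 - 3 * fps_X + fps_X ^ 2) :: rat fps)
        = inverse (1 - fps_X ^ k / (1 - 3 * fps_X + fps_X ^ 2 + fps_X ^ k))"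
proof -
  let ?E = "1 - 3 * fps_X + fps_X ^ 2 :: rat fps"
  have E0: "?E $ 0 \<noteq> 0" and X0: "(fps_X ^ k :: rat fps) $ 0 = 0"
    using assms by simp_all
  have "gen_fun (M_set k) = 1 + gen_fun (P_set k) * gen_fun (M_set k)"
    using gen_fun_free_monoid[OF free_monoid_M_set fib_comp_even_if_in_M_set] primes_M_set by simp
  then have "gen_fun (P_set k) = fps_X ^ k / (?E + fps_X ^ k)"
    using fps_eq_divide_if_eq_one_plus_times[OF E0 X0] gen_fun_M_set[OF assms] by blast
  moreover have "finite {c \<in> P_set k. sum_list c = 2 * n}" for n
    by (rule finite_subset[OF _ finite_fib_comps])
      (auto simp: primes_M_set[symmetric] prime_of_def dest: fib_comp_even_if_in_M_set)
  ultimately show ?thesis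
    by (simp add: free_monoid_M_set primes_M_set fps_X_power_divide_even_fib
        fps_inverse_one_minus_divide[OF E0 X0])
qed

end
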